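(* Let $W\colon \mathrm{GL}^+(2)\to\mathbb{R}$ be a rank-one convex isotropic energy function with an additive volumetric-isochoric split, i.e. there are functions $h,f\colon(0,\infty)\to\mathbb{R}$ with $h(t)=h(1/t)$ for all $t>0$ such that \[ W(F)=h\!\left(\frac{\lambda_1}{\lambda_2}\right)+f(\lambda_1\lambda_2)\qquad\text{for all }F\in\mathrm{GL}^+(2), \] where $\lambda_1,\lambda_2>0$ are the singular values of $F$. Then $h$ is convex on $(0,\infty)$ or $f$ is convex on $(0,\infty)$.
   Context: $\mathrm{GL}^+(2)=\{F\in\mathbb{R}^{2\times2}:\det F>0\}$. $W$ is isotropic (and objective) if $W(R_1FR_2)=W(F)$ for all $R_1\in\mathrm{SO}(2)$, $R_2\in\mathrm{O}(2)$. A function $W\colon\mathrm{GL}^+(2)\to\mathbb{R}$ is called rank-one convex if its extension $\widehat W\colon\mathbb{R}^{2\times2}\to\mathbb{R}\cup\{+\infty\}$, $\widehat W=W$ on $\mathrm{GL}^+(2)$ and $\widehat W=+\infty$ otherwise, satisfies $\widehat W(tF_1+(1-t)F_2)\le t\widehat W(F_1)+(1-t)\widehat W(F_2)$ for all $F_1,F_2$ with $\operatorname{rank}(F_1-F_2)=1$ and $t\in(0,1)$. *)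

theory Defs
  imports "HOL-Analysis.Analysis" "HOL-Library.Extended_Real"
begin

type_synonym mat2 = "real^2^2"

definition W_ext :: "(mat2 \<Rightarrow> real) \<Rightarrow> mat2 \<Rightarrow> ereal" where
  "W_ext W F = (if det F > 0 then ereal (W F) else \<infinity>)"

definition rank_one_convex_GL2 :: "(mat2 \<Rightarrow> real) \<Rightarrow> bool" where
  "rank_one_convex_GL2 W \<longleftrightarrow>
     (\<forall>F1 F2 :: mat2. \<forall>t::real. rank (F1 - F2) = 1 \<and> 0 < t \<and> t < 1 \<longrightarrow>
        W_ext W (t *\<^sub>R F1 + (1 - t) *\<^sub>R F2)
          \<le> ereal t * W_ext W F1 + ereal (1 - t) * W_ext W F2)"

definition isotropic_GL2 :: "(mat2 \<Rightarrow> real) \<Rightarrow> bool" where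
  "isotropic_GL2 W \<longleftrightarrow>
     (\<forall>F R1 R2 :: mat2. det F > 0 \<and> orthogonal_matrix R1 \<and> det R1 = 1 \<and> orthogonal_matrix R2
        \<longrightarrow> W (R1 ** F ** R2) = W F)"

text \<open>l1, l2 are the singular values of F (counted with multiplicity): they are nonnegative and
  their squares are the eigenvalues (with multiplicity) of F^T F, i.e. the characteristic
  polynomial of F^T F is (x - l1^2)(x - l2^2).\<close>
definition singular_values2 :: "mat2 \<Rightarrow> real \<Rightarrow> real \<Rightarrow> bool" where
  "singular_values2 F l1 l2 \<longleftrightarrow> 0 \<le> l1 \<and> 0 \<le> l2 \<and>
     (\<forall>x::real. det (x *\<^sub>R mat 1 - transpose F ** F) = (x - l1\<^sup>2) * (x - l2\<^sup>2))"

end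

theory Submission
  imports Defs
begin

text \<open>Rank-one convexity makes W convex along every rank-one line inside GL+(2). On the
  diagonal lines diag(c y, c) this says that y \<mapsto> h y + f (k y) is convex for every k > 0,
  and on the shear line [[1, s], [0, 1]] it makes h, and then f, continuous. A continuous
  function \<phi> on (0, \<infinity>) that is not convex has a point m with
  r \<phi>(m / r) + \<phi>(m r) < (r + 1) \<phi>(m) for all r > 1 close to 1. If neither h nor f were
  convex, rescaling the argument of f by the ratio k of the two defect points would make these
  defects add up to a violation of the convexity of h y + f (k y).\<close>

definition mat2x2 :: "real \<Rightarrow> real \<Rightarrow> real \<Rightarrow> real \<Rightarrow> mat2" where
  "mat2x2 a b c d = (\<chi> i j. if i = 1 then (if j = 1 then a else b) else (if j = 1 then c else d))"

lemma mat2x2_nth [simp]: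
  "mat2x2 a b c d $ 1 $ 1 = a" "mat2x2 a b c d $ 1 $ 2 = b"
  "mat2x2 a b c d $ 2 $ 1 = c" "mat2x2 a b c d $ 2 $ 2 = d"
  by (simp_all add: mat2x2_def)

lemma mat2_eq_iff:
  "(A :: mat2) = B \<longleftrightarrow> A$1$1 = B$1$1 \<and> A$1$2 = B$1$2 \<and> A$2$1 = B$2$1 \<and> A$2$2 = B$2$2"
  by (auto simp: vec_eq_iff forall_2)

lemma mat2x2_add_scaleR:
  "mat2x2 a b c d + t *\<^sub>R mat2x2 a' b' c' d' = mat2x2 (a + t * a') (b + t * b') (c + t * c') (d + t * d')"
  by (simp add: mat2_eq_iff)

lemma det_mat2x2 [simp]: "det (mat2x2 a b c d) = a * d - b * c"
  by (simp add: det_2)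

lemma charpoly_transpose_mult_mat2x2:
  "det (x *\<^sub>R mat 1 - transpose (mat2x2 a b c d) ** mat2x2 a b c d)
    = x\<^sup>2 - x * (a\<^sup>2 + b\<^sup>2 + c\<^sup>2 + d\<^sup>2) + (a * d - b * c)\<^sup>2"
  by (simp add: det_2 matrix_matrix_mult_def sum_2 transpose_def mat_def power2_eq_square
      algebra_simps)

lemma singular_values2_mat2x2:
  assumes "0 \<le> l1" "0 \<le> l2" "l1\<^sup>2 + l2\<^sup>2 = a\<^sup>2 + b\<^sup>2 + c\<^sup>2 + d\<^sup>2" "l1 * l2 = a * d - b * c"
  shows "singular_values2 (mat2x2 a b c d) l1 l2"
proof -
  have "x\<^sup>2 - x * (l1\<^sup>2 + l2\<^sup>2) + (l1 * l2)\<^sup>2 = (x - l1\<^sup>2) * (x - l2\<^sup>2)" for x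
    by (simp add: power2_eq_square algebra_simps)
  then show ?thesis
    using assms unfolding singular_values2_def charpoly_transpose_mult_mat2x2 by simp
qed

lemma rank_mat2_eq_1:
  fixes A :: mat2
  assumes "A \<noteq> 0" "det A = 0"
  shows "rank A = 1"
proof -
  have "rank A < 2"
    using det_eq_0_rank[of A] assms(2) by simp
  moreover have "rank A \<noteq> 0"
    using rank_eq_0[of A] assms(1) by blast
  ultimately show ?thesis
    by linarith
qed

lemma rank_scaleR_le:
  fixes A :: "real^'n^'m"
  shows "rank (c *\<^sub>R A) \<le> rank A"
  using rank_mul_le_right[of "c *\<^sub>R mat 1" A] by (simp add: scalar_matrix_assoc[symmetric])

lemma rank_scaleR:
  fixes A :: "real^'n^'m"
  assumes "c \<noteq> 0"
  shows "rank (c *\<^sub>R A) = rank A"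
proof (rule antisym)
  have "rank A = rank (inverse c *\<^sub>R (c *\<^sub>R A))"
    using assms by simp
  then show "rank A \<le> rank (c *\<^sub>R A)"
    using rank_scaleR_le by metis
qed (rule rank_scaleR_le)

lemma rank_one_convex_GL2D:
  assumes "rank_one_convex_GL2 W" "rank (F1 - F2) = 1" "0 < t" "t < 1"
    and "det F1 > 0" "det F2 > 0" "det (t *\<^sub>R F1 + (1 - t) *\<^sub>R F2) > 0"
  shows "W (t *\<^sub>R F1 + (1 - t) *\<^sub>R F2) \<le> t * W F1 + (1 - t) * W F2"
proof -
  have "W_ext W (t *\<^sub>R F1 + (1 - t) *\<^sub>R F2) \<le> ereal t * W_ext W F1 + ereal (1 - t) * W_ext W F2"
    using assms(1-4) unfolding rank_one_convex_GL2_def by blast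
  then show ?thesis
    using assms(5-7) unfolding W_ext_def by simp
qed

lemma rank_one_convex_GL2_convex_on_line:
  assumes "rank_one_convex_GL2 W" "rank D = 1" "convex I"
    and "\<And>t. t \<in> I \<Longrightarrow> det (F + t *\<^sub>R D) > 0"
  shows "convex_on I (\<lambda>t. W (F + t *\<^sub>R D))"
proof (rule convex_on_linorderI[OF _ \<open>convex I\<close>])
  fix s x y :: real
  assume s: "0 < s" "s < 1" and xy: "x \<in> I" "y \<in> I" "x < y"
  let ?z = "(1 - s) *\<^sub>R x + s *\<^sub>R y"
  have "?z \<in> I"
    using convexD[OF \<open>convex I\<close> xy(1,2), of "1 - s" s] s by simp
  have "(F + x *\<^sub>R D) - (F + y *\<^sub>R D) = (x - y) *\<^sub>R D"
    by (simp add: algebra_simps)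
  then have "rank ((F + x *\<^sub>R D) - (F + y *\<^sub>R D)) = 1"
    using rank_scaleR[of "x - y" D] assms(2) xy(3) by simp
  moreover have "(1 - s) *\<^sub>R (F + x *\<^sub>R D) + (1 - (1 - s)) *\<^sub>R (F + y *\<^sub>R D) = F + ?z *\<^sub>R D"
    by (simp add: algebra_simps)
  ultimately show "W (F + ?z *\<^sub>R D) \<le> (1 - s) * W (F + x *\<^sub>R D) + s * W (F + y *\<^sub>R D)"
    using rank_one_convex_GL2D[OF assms(1), of "F + x *\<^sub>R D" "F + y *\<^sub>R D" "1 - s"]
      assms(4) xy \<open>?z \<in> I\<close> s by simp
qed

lemma convex_on_cong:
  assumes "\<And>x. x \<in> S \<Longrightarrow> f x = g x"
  shows "convex_on S f \<longleftrightarrow> convex_on S g"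
  using assms by (auto simp: convex_on_def convex_def)

lemma convex_on_pos_realsD:
  fixes \<phi> :: "real \<Rightarrow> real"
  assumes "convex_on {0<..} \<phi>" "0 < m" "0 < r"
  shows "(r + 1) * \<phi> m \<le> r * \<phi> (m / r) + \<phi> (m * r)"
proof -
  define t where "t = 1 / (r + 1)"
  have t: "0 \<le> t" "t \<le> 1" "1 - t = r * t" "(r + 1) * t = 1"
    using assms(3) unfolding t_def by (simp_all add: field_simps)
  have "(1 - t) *\<^sub>R (m / r) + t *\<^sub>R (m * r) = (r + 1) * t * m"
    using assms(3) unfolding t(3) by (simp add: algebra_simps)
  then have "\<phi> m \<le> (1 - t) * \<phi> (m / r) + t * \<phi> (m * r)"
    using convex_onD[OF assms(1) t(1,2), of "m / r" "m * r"] assms(2,3) t(4) by simp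
  then have "(r + 1) * \<phi> m \<le> (r + 1) * ((1 - t) * \<phi> (m / r) + t * \<phi> (m * r))"
    using assms(3) by simp
  also have "\<dots> = r * ((r + 1) * t) * \<phi> (m / r) + ((r + 1) * t) * \<phi> (m * r)"
    unfolding t(3) by (simp add: algebra_simps)
  also have "\<dots> = r * \<phi> (m / r) + \<phi> (m * r)"
    unfolding t(4) by simp
  finally show ?thesis .
qed

lemma leftmost_maximum:
  fixes g :: "real \<Rightarrow> real"
  assumes "continuous_on {x..y} g" "x \<le> y"
  obtains m where "m \<in> {x..y}" "\<And>v. v \<in> {x..y} \<Longrightarrow> g v \<le> g m"
    "\<And>v. v \<in> {x..<m} \<Longrightarrow> g v < g m"
proof -
  obtain u where u: "u \<in> {x..y}" "\<And>v. v \<in> {x..y} \<Longrightarrow> g v \<le> g u"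
    using continuous_attains_sup[OF compact_Icc _ assms(1)] assms(2) by auto
  define Z where "Z = {v \<in> {x..y}. g v = g u}"
  have "closed Z"
    unfolding Z_def by (rule continuous_closed_preimage_constant[OF assms(1)]) simp
  moreover have "Z \<noteq> {}" "bdd_below Z"
    using u unfolding Z_def by (auto intro: bdd_belowI[of _ x])
  ultimately have "Inf Z \<in> Z"
    by (rule closed_contains_Inf[rotated -1])
  show thesis
  proof (rule that[of "Inf Z"])
    show "Inf Z \<in> {x..y}" "\<And>v. v \<in> {x..y} \<Longrightarrow> g v \<le> g (Inf Z)"
      using \<open>Inf Z \<in> Z\<close> u unfolding Z_def by auto
    fix v assume v: "v \<in> {x..<Inf Z}"
    then have "v \<notin> Z"
      using cInf_lower[OF _ \<open>bdd_below Z\<close>] by force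
    then show "g v < g (Inf Z)"
      using v \<open>Inf Z \<in> Z\<close> u unfolding Z_def by force
  qed
qed

lemma not_convex_on_pos_realsE:
  fixes \<phi> :: "real \<Rightarrow> real"
  assumes "continuous_on {0<..} \<phi>" "\<not> convex_on {0<..} \<phi>"
  obtains m \<delta> where "0 < m" "1 < \<delta>"
    "\<And>r. 1 < r \<Longrightarrow> r \<le> \<delta> \<Longrightarrow> r * \<phi> (m / r) + \<phi> (m * r) < (r + 1) * \<phi> m"
proof -
  have "\<exists>t x y. 0 < t \<and> t < 1 \<and> 0 < x \<and> x < y \<and>
      \<phi> ((1 - t) * x + t * y) > (1 - t) * \<phi> x + t * \<phi> y"
  proof (rule ccontr)
    assume "\<not> ?thesis"
    then have "convex_on {0<..} \<phi>"
      by (intro convex_on_linorderI) (simp_all, meson not_le)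
    with assms(2) show False ..
  qed
  then obtain t x y where t: "0 < t" "t < 1" and xy: "0 < x" "x < y"
    and above_chord: "\<phi> ((1 - t) * x + t * y) > (1 - t) * \<phi> x + t * \<phi> y"
    by blast
  define slope where "slope = (\<phi> y - \<phi> x) / (y - x)"
  define L where "L u = \<phi> x + (u - x) * slope" for u
  define g where "g u = \<phi> u - L u" for u
  have "continuous_on {x..y} \<phi>"
    by (rule continuous_on_subset[OF assms(1)]) (use xy in auto)
  then have "continuous_on {x..y} g"
    unfolding g_def L_def by (intro continuous_intros)
  \<comment> \<open>leftmost, so that the excess over the chord is strict on the left of m\<close>
  then obtain m where m: "m \<in> {x..y}" "\<And>v. v \<in> {x..y} \<Longrightarrow> g v \<le> g m"
    and left_of_m: "\<And>v. v \<in> {x..<m} \<Longrightarrow> g v < g m"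
    using leftmost_maximum xy(2) by (metis less_imp_le)
  have "L ((1 - t) * x + t * y) = (1 - t) * \<phi> x + t * \<phi> y"
    unfolding L_def slope_def using xy(2) by (simp add: field_simps)
  then have "g ((1 - t) * x + t * y) > 0"
    using above_chord unfolding g_def by simp
  moreover have "(1 - t) * x + t * y \<in> {x..y}"
  proof -
    have "0 \<le> t * (y - x)" "t * (y - x) \<le> y - x"
      using t xy by (simp_all add: mult_left_le_one_le)
    moreover have "(1 - t) * x + t * y = x + t * (y - x)"
      by (simp add: algebra_simps)
    ultimately show ?thesis
      by simp
  qed
  ultimately have "g m > 0"
    using m(2) by force
  moreover have "g x = 0" "g y = 0"
    using xy(2) unfolding g_def L_def slope_def by simp_all
  ultimately have "x < m" "m < y"
    using m(1) by (auto simp: order.order_iff_strict)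
  then have "0 < m"
    using xy(1) by simp
  show thesis
  proof (rule that[of m "min (m / x) (y / m)"])
    show "0 < m" "1 < min (m / x) (y / m)"
      using xy \<open>0 < m\<close> \<open>x < m\<close> \<open>m < y\<close> by auto
    fix r assume r: "1 < r" "r \<le> min (m / x) (y / m)"
    have "x \<le> m / r" "m / r < m" "m < m * r" "m * r \<le> y"
      using r xy(1) \<open>0 < m\<close> by (simp_all add: field_simps)
    then have "m / r \<in> {x..<m}" "m * r \<in> {x..y}"
      using \<open>x < m\<close> by auto
    then have "r * g (m / r) < r * g m" "g (m * r) \<le> g m"
      using left_of_m m(2) r(1) by simp_all
    then have "r * g (m / r) + g (m * r) < (r + 1) * g m"
      by (simp add: algebra_simps)
    moreover have "r * L (m / r) + L (m * r) = (r + 1) * L m"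
      using r(1) unfolding L_def by (simp add: algebra_simps)
    ultimately show "r * \<phi> (m / r) + \<phi> (m * r) < (r + 1) * \<phi> m"
      unfolding g_def by (simp add: algebra_simps)
  qed
qed

locale volumetric_isochoric_split =
  fixes W :: "mat2 \<Rightarrow> real" and h f :: "real \<Rightarrow> real"
  assumes rank_one_convex: "rank_one_convex_GL2 W"
    and split: "\<And>F l1 l2. det F > 0 \<Longrightarrow> singular_values2 F l1 l2 \<Longrightarrow>
      W F = h (l1 / l2) + f (l1 * l2)"
begin

lemma convex_on_plus_rescaled:
  assumes "0 < k"
  shows "convex_on {0<..} (\<lambda>y. h y + f (k * y))"
proof -
  define c where "c = sqrt k"
  have c: "0 < c" "c * c = k"
    using assms unfolding c_def by simp_all
  have diag: "mat2x2 0 0 0 c + y *\<^sub>R mat2x2 c 0 0 0 = mat2x2 (c * y) 0 0 c" for y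
    by (simp add: mat2x2_add_scaleR mult.commute)
  have on_diagonal: "W (mat2x2 (c * y) 0 0 c) = h y + f (k * y)" if "y \<in> {0<..}" for y
  proof -
    have "singular_values2 (mat2x2 (c * y) 0 0 c) (c * y) c"
      using c that by (intro singular_values2_mat2x2) auto
    then have "W (mat2x2 (c * y) 0 0 c) = h (c * y / c) + f (c * y * c)"
      using c that by (intro split) simp_all
    also have "\<dots> = h y + f (k * y)"
      using c by (simp add: mult.commute[of c y] mult.assoc mult.commute[of y k])
    finally show ?thesis .
  qed
  have "convex_on {0<..} (\<lambda>y. W (mat2x2 0 0 0 c + y *\<^sub>R mat2x2 c 0 0 0))"
    using c by (intro rank_one_convex_GL2_convex_on_line rank_one_convex rank_mat2_eq_1)
      (auto simp: diag mat2_eq_iff)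
  then show ?thesis
    unfolding diag by (rule convex_on_cong[THEN iffD1, rotated]) (rule on_diagonal)
qed

lemma continuous_on_h: "continuous_on {0<..} h"
proof -
  define \<sigma> where "\<sigma> s = W (mat2x2 1 0 0 1 + s *\<^sub>R mat2x2 0 1 0 0)" for s
  have "convex_on UNIV \<sigma>"
    unfolding \<sigma>_def
    by (intro rank_one_convex_GL2_convex_on_line rank_one_convex rank_mat2_eq_1)
      (auto simp: mat2x2_add_scaleR mat2_eq_iff)
  then have "continuous_on UNIV \<sigma>"
    by (rule convex_on_continuous[OF open_UNIV])
  then have "continuous_on {0<..} (\<lambda>y. \<sigma> (sqrt y - 1 / sqrt y) - f 1)"
    by (intro continuous_intros continuous_on_compose2[OF \<open>continuous_on UNIV \<sigma>\<close>]) auto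
  moreover have "\<sigma> (sqrt y - 1 / sqrt y) - f 1 = h y" if "y \<in> {0<..}" for y
  proof -
    have "singular_values2 (mat2x2 1 (sqrt y - 1 / sqrt y) 0 1) (sqrt y) (1 / sqrt y)"
      using that by (intro singular_values2_mat2x2) (auto simp: power2_eq_square field_simps)
    then have "\<sigma> (sqrt y - 1 / sqrt y) = h (sqrt y / (1 / sqrt y)) + f (sqrt y * (1 / sqrt y))"
      unfolding \<sigma>_def mat2x2_add_scaleR by (intro split) simp_all
    then show ?thesis
      using that by simp
  qed
  ultimately show ?thesis
    by (rule continuous_on_eq)
qed

lemma continuous_on_f: "continuous_on {0<..} f"
proof -
  have "continuous_on {0<..} (\<lambda>y. h y + f (1 * y))"
    using convex_on_plus_rescaled[of 1] by (intro convex_on_continuous) auto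
  from continuous_on_diff[OF this continuous_on_h] show ?thesis
    by simp
qed

end

theorem lemma3p3:
  fixes W :: "real^2^2 \<Rightarrow> real" and h f :: "real \<Rightarrow> real"
  assumes "rank_one_convex_GL2 W"
    and "isotropic_GL2 W"
    and "\<And>t. t > 0 \<Longrightarrow> h t = h (1 / t)"
    and "\<And>F l1 l2. det F > 0 \<Longrightarrow> singular_values2 F l1 l2 \<Longrightarrow>
           W F = h (l1 / l2) + f (l1 * l2)"
  shows "convex_on {0<..} h \<or> convex_on {0<..} f"
proof (rule ccontr)
  interpret volumetric_isochoric_split W h f
    using assms(1,4) by unfold_locales
  assume "\<not> (convex_on {0<..} h \<or> convex_on {0<..} f)"
  then obtain m1 \<delta>1 m2 \<delta>2 where "0 < m1" "1 < \<delta>1" "0 < m2" "1 < \<delta>2"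
    and defect_h: "\<And>r. 1 < r \<Longrightarrow> r \<le> \<delta>1 \<Longrightarrow> r * h (m1 / r) + h (m1 * r) < (r + 1) * h m1"
    and defect_f: "\<And>r. 1 < r \<Longrightarrow> r \<le> \<delta>2 \<Longrightarrow> r * f (m2 / r) + f (m2 * r) < (r + 1) * f m2"
    using not_convex_on_pos_realsE[OF continuous_on_h] not_convex_on_pos_realsE[OF continuous_on_f]
    by metis
  define r where "r = min \<delta>1 \<delta>2"
  define k where "k = m2 / m1"
  have "1 < r" "0 < k"
    using \<open>1 < \<delta>1\<close> \<open>1 < \<delta>2\<close> \<open>0 < m1\<close> \<open>0 < m2\<close> unfolding r_def k_def by auto
  have "(r + 1) * (h m1 + f (k * m1))
      \<le> r * (h (m1 / r) + f (k * (m1 / r))) + (h (m1 * r) + f (k * (m1 * r)))"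
    using convex_on_pos_realsD[OF convex_on_plus_rescaled[OF \<open>0 < k\<close>] \<open>0 < m1\<close>, of r] \<open>1 < r\<close>
    by simp
  moreover have "k * m1 = m2" "k * (m1 / r) = m2 / r" "k * (m1 * r) = m2 * r"
    using \<open>0 < m1\<close> unfolding k_def by simp_all
  ultimately have "(r + 1) * (h m1 + f m2) \<le> r * (h (m1 / r) + f (m2 / r)) + (h (m1 * r) + f (m2 * r))"
    by simp
  then show False
    using defect_h[of r] defect_f[of r] \<open>1 < r\<close> unfolding r_def by (simp add: algebra_simps)
qed

end
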